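(* There exist $b_1,b_2\in L^\infty_{loc}(\mathbb{R})$ such that $C_bH=[b_2,[b_1,H]]$ is bounded on $L^2(\mathbb{R})$, while $S_{2+\varepsilon}(b_1,b_2)=\infty$ and $T_{2+\varepsilon}(b_1,b_2)=\infty$ for every $\varepsilon>0$. In particular, finiteness of $S_{2+\varepsilon}+T_{2+\varepsilon}$ for some $\varepsilon>0$ does not characterize the $L^2$-boundedness of $C_bH$.
   Context: $H$ is the Hilbert transform $Hf(x)=\lim_{\varepsilon\to0}\int_{|x-y|>\varepsilon}\frac{f(y)}{x-y}dy$; $[A,B]=AB-BA$ with $b_i$ acting by multiplication; the commutator is defined on $L^\infty_c$ and bounded on $L^2$ means $\|C_bHf\|_2\le K\|f\|_2$ for $f\in L^\infty_c$. For $r>0$, with $\langle g\rangle_I=\frac1{|I|}\int_Ig$ and suprema over intervals $I\subset\mathbb{R}$: $S_r(b_1,b_2)=\sup_I\big(\frac1{|I|}\int_I|b_1-\langle b_1\rangle_I|^r\big)^{1/r}\big(\frac1{|I|}\int_I|b_2-\langle b_2\rangle_I|^r\big)^{1/r}$, $T_r(b_1,b_2)=\sup_I\big(\frac1{|I|}\int_I|b_1-\langle b_1\rangle_I|^r|b_2-\langle b_2\rangle_I|^r\big)^{1/r}$. *)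

theory Defs
  imports "HOL-Analysis.Analysis"
begin

definition Linf_loc :: "(real \<Rightarrow> real) \<Rightarrow> bool" where
  "Linf_loc b \<longleftrightarrow> b \<in> borel_measurable lborel \<and>
     (\<forall>a c. \<exists>C. AE x in lborel. x \<in> {a..c} \<longrightarrow> \<bar>b x\<bar> \<le> C)"

definition Linf_c :: "(real \<Rightarrow> real) \<Rightarrow> bool" where
  "Linf_c f \<longleftrightarrow> f \<in> borel_measurable lborel \<and>
     (\<exists>C. AE x in lborel. \<bar>f x\<bar> \<le> C) \<and>
     (\<exists>R. AE x in lborel. R < \<bar>x\<bar> \<longrightarrow> f x = 0)"

definition trunc_hilbert :: "(real \<Rightarrow> real) \<Rightarrow> real \<Rightarrow> real \<Rightarrow> real" where
  "trunc_hilbert f \<epsilon> x = (\<integral>y\<in>{y. \<epsilon> < \<bar>x - y\<bar>}. f y / (x - y) \<partial>lborel)"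

definition hilbert :: "(real \<Rightarrow> real) \<Rightarrow> real \<Rightarrow> real" where
  "hilbert f x = Lim (at_right 0) (\<lambda>\<epsilon>. trunc_hilbert f \<epsilon> x)"

definition comm1 :: "(real \<Rightarrow> real) \<Rightarrow> (real \<Rightarrow> real) \<Rightarrow> real \<Rightarrow> real" where
  "comm1 b g x = b x * hilbert g x - hilbert (\<lambda>y. b y * g y) x"

definition comm2 :: "(real \<Rightarrow> real) \<Rightarrow> (real \<Rightarrow> real) \<Rightarrow> (real \<Rightarrow> real) \<Rightarrow> real \<Rightarrow> real" where
  "comm2 b1 b2 f x = b2 x * comm1 b1 f x - comm1 b1 (\<lambda>y. b2 y * f y) x"

definition L2_bounded_on_Linf_c :: "((real \<Rightarrow> real) \<Rightarrow> real \<Rightarrow> real) \<Rightarrow> bool" where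
  "L2_bounded_on_Linf_c T \<longleftrightarrow> (\<exists>K\<ge>0. \<forall>f. Linf_c f \<longrightarrow>
     (\<integral>\<^sup>+x. ennreal ((T f x)\<^sup>2) \<partial>lborel) \<le> ennreal (K\<^sup>2) * (\<integral>\<^sup>+x. ennreal ((f x)\<^sup>2) \<partial>lborel))"

definition avg :: "(real \<Rightarrow> real) \<Rightarrow> real \<Rightarrow> real \<Rightarrow> real" where
  "avg b a c = (\<integral>x\<in>{a..c}. b x \<partial>lborel) / (c - a)"

definition osc :: "real \<Rightarrow> (real \<Rightarrow> real) \<Rightarrow> real \<Rightarrow> real \<Rightarrow> real" where
  "osc r b a c = ((\<integral>x\<in>{a..c}. \<bar>b x - avg b a c\<bar> powr r \<partial>lborel) / (c - a)) powr (1 / r)"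

definition S_osc :: "real \<Rightarrow> (real \<Rightarrow> real) \<Rightarrow> (real \<Rightarrow> real) \<Rightarrow> ereal" where
  "S_osc r b1 b2 = (SUP I\<in>{(a, c). a < c}. ereal (osc r b1 (fst I) (snd I) * osc r b2 (fst I) (snd I)))"

definition T_osc :: "real \<Rightarrow> (real \<Rightarrow> real) \<Rightarrow> (real \<Rightarrow> real) \<Rightarrow> ereal" where
  "T_osc r b1 b2 = (SUP I\<in>{(a, c). a < c}. ereal (
     ((\<integral>x\<in>{fst I..snd I}. \<bar>b1 x - avg b1 (fst I) (snd I)\<bar> powr r *
          \<bar>b2 x - avg b2 (fst I) (snd I)\<bar> powr r \<partial>lborel) / (snd I - fst I)) powr (1 / r)))"

end

theory Submission
  imports Defs
begin

(* Take b1 = indicator of [0,1] and b2 = bumps of height 2^k/(k+1) on [2*4^k, 3*4^k].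
   The supports are at distance at least 1, so b1 b2 = 0 and C_b H is the integral operator
   with kernel (b1 x - b1 y)(b2 x - b2 y)/(x - y) = -(b1 x b2 y + b2 x b1 y)/(x - y); it is
   Hilbert-Schmidt because the integral of (b2 y / y)^2 is at most sum 1/(4 (k+1)^2).
   On I = [0, 3*4^k], b1 deviates from its mean by about 1 on a set of relative measure
   1/|I|, and b2 deviates from its mean by about 2^k/(k+1) on a fixed fraction of I.
   Hence both S_r and T_r over I are at least a constant times 2^k/(k+1) * 4^(-k/r),
   which is unbounded for r > 2. *)

section \<open>Second commutators with separated symbols\<close>

lemma hilbert_eq_integral_if_vanishing_near:
  assumes "0 < \<delta>" and vanish: "\<And>y. g y \<noteq> 0 \<Longrightarrow> \<delta> \<le> \<bar>x - y\<bar>"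
  shows "hilbert g x = (\<integral>y. g y / (x - y) \<partial>lborel)"
proof -
  have "eventually (\<lambda>\<epsilon>. trunc_hilbert g \<epsilon> x = (\<integral>y. g y / (x - y) \<partial>lborel)) (at_right 0)"
    unfolding eventually_at_right_field
  proof (intro exI[of _ \<delta>] conjI allI impI)
    fix \<epsilon> :: real assume "0 < \<epsilon>" "\<epsilon> < \<delta>"
    then have "(\<lambda>y. indicator {y. \<epsilon> < \<bar>x - y\<bar>} y *\<^sub>R (g y / (x - y))) = (\<lambda>y. g y / (x - y))"
      using vanish by (force simp: indicator_def)
    then show "trunc_hilbert g \<epsilon> x = (\<integral>y. g y / (x - y) \<partial>lborel)"
      unfolding trunc_hilbert_def set_lebesgue_integral_def by (simp only:)
  qed (fact assms(1))
  then have "((\<lambda>\<epsilon>. trunc_hilbert g \<epsilon> x) \<longlongrightarrow> (\<integral>y. g y / (x - y) \<partial>lborel)) (at_right 0)"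
    by (rule tendsto_eventually)
  then show ?thesis
    unfolding hilbert_def by (rule tendsto_Lim[OF trivial_limit_at_right_real])
qed

lemma hilbert_zero: "hilbert (\<lambda>y. 0) x = 0"
  by (simp add: hilbert_eq_integral_if_vanishing_near[of 1])

lemma mult_hilbert_eq_integral_if_separated:
  assumes "0 < \<delta>" and sep: "\<And>y. a x \<noteq> 0 \<Longrightarrow> b y \<noteq> 0 \<Longrightarrow> \<delta> \<le> \<bar>x - y\<bar>"
  shows "a x * hilbert (\<lambda>y. b y * f y) x = (\<integral>y. a x * b y * f y / (x - y) \<partial>lborel)"
proof (cases "a x = 0")
  case False
  then have H: "hilbert (\<lambda>y. b y * f y) x = (\<integral>y. b y * f y / (x - y) \<partial>lborel)"
    using sep by (intro hilbert_eq_integral_if_vanishing_near[OF \<open>0 < \<delta>\<close>]) auto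
  have "a x * hilbert (\<lambda>y. b y * f y) x = (\<integral>y. a x * (b y * f y / (x - y)) \<partial>lborel)"
    by (simp only: integral_mult_right_zero H)
  then show ?thesis by (simp add: mult.assoc)
qed simp

lemma comm2_if_disjoint:
  assumes "\<And>y. b1 y * b2 y = 0"
  shows "comm2 b1 b2 f x =
    - (b2 x * hilbert (\<lambda>y. b1 y * f y) x) - b1 x * hilbert (\<lambda>y. b2 y * f y) x"
proof -
  have "(\<lambda>y. b1 y * (b2 y * f y)) = (\<lambda>y. 0)"
    by (simp only: mult.assoc[symmetric] assms mult_zero_left)
  moreover have "b2 x * (b1 x * hilbert f x) = 0"
    using assms[of x] by auto
  ultimately show ?thesis
    unfolding comm2_def comm1_def right_diff_distrib by (simp add: hilbert_zero)
qed

definition comm2_kernel :: "(real \<Rightarrow> real) \<Rightarrow> (real \<Rightarrow> real) \<Rightarrow> real \<Rightarrow> real \<Rightarrow> real" where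
  "comm2_kernel b1 b2 x y = (b1 x - b1 y) * (b2 x - b2 y) / (x - y)"

lemma comm2_kernel_if_disjoint:
  assumes "\<And>y. b1 y * b2 y = 0"
  shows "comm2_kernel b1 b2 x y = - (b2 x * b1 y / (x - y)) - b1 x * b2 y / (x - y)"
proof -
  have "(b1 x - b1 y) * (b2 x - b2 y) = b1 x * b2 x + b1 y * b2 y - b2 x * b1 y - b1 x * b2 y"
    by (simp add: algebra_simps)
  also have "\<dots> = - (b2 x * b1 y) - b1 x * b2 y"
    by (simp only: assms add_0_left diff_0)
  finally show ?thesis
    unfolding comm2_kernel_def by (simp add: diff_divide_distrib)
qed

lemma comm2_eq_integral_kernel:
  assumes "0 < \<delta>" and sep: "\<And>x y. b1 x \<noteq> 0 \<Longrightarrow> b2 y \<noteq> 0 \<Longrightarrow> \<delta> \<le> \<bar>x - y\<bar>"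
  shows "comm2 b1 b2 f x = (\<integral>y. comm2_kernel b1 b2 x y * f y \<partial>lborel)"
proof -
  have disj: "b1 y * b2 y = 0" for y
    using sep[of y y] \<open>0 < \<delta>\<close> by fastforce
  have H1: "b1 x * hilbert (\<lambda>y. b2 y * f y) x = (\<integral>y. b1 x * b2 y * f y / (x - y) \<partial>lborel)"
    using sep by (intro mult_hilbert_eq_integral_if_separated[OF \<open>0 < \<delta>\<close>])
  have H2: "b2 x * hilbert (\<lambda>y. b1 y * f y) x = (\<integral>y. b2 x * b1 y * f y / (x - y) \<partial>lborel)"
    using sep by (intro mult_hilbert_eq_integral_if_separated[OF \<open>0 < \<delta>\<close>])
      (fastforce simp: abs_minus_commute)
  show ?thesis
  proof (cases "b1 x = 0")
    case True
    then show ?thesis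
      using H2 by (simp add: comm2_if_disjoint[OF disj] comm2_kernel_if_disjoint[OF disj])
  next
    case False
    then have "b2 x = 0" using disj[of x] by simp
    then show ?thesis
      using H1 by (simp add: comm2_if_disjoint[OF disj] comm2_kernel_if_disjoint[OF disj])
  qed
qed

lemma square_integral_mult_le:
  fixes f g :: "'a \<Rightarrow> real"
  assumes [measurable]: "f \<in> borel_measurable M" "g \<in> borel_measurable M"
  shows "ennreal ((\<integral>x. f x * g x \<partial>M)\<^sup>2) \<le>
    (\<integral>\<^sup>+x. ennreal ((f x)\<^sup>2) \<partial>M) * (\<integral>\<^sup>+x. ennreal ((g x)\<^sup>2) \<partial>M)"
proof -
  have "ennreal \<bar>\<integral>x. f x * g x \<partial>M\<bar> \<le> (\<integral>\<^sup>+x. ennreal \<bar>f x\<bar> * ennreal \<bar>g x\<bar> \<partial>M)"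
  proof (cases "integrable M (\<lambda>x. f x * g x)")
    case True
    then show ?thesis
      using integral_norm_bound_ennreal by (fastforce simp: abs_mult ennreal_mult)
  qed (simp add: not_integrable_integral_eq)
  then have "(ennreal \<bar>\<integral>x. f x * g x \<partial>M\<bar>)\<^sup>2 \<le> (\<integral>\<^sup>+x. ennreal \<bar>f x\<bar> * ennreal \<bar>g x\<bar> \<partial>M)\<^sup>2"
    by (rule power_mono) simp
  then have "ennreal ((\<integral>x. f x * g x \<partial>M)\<^sup>2) \<le> (\<integral>\<^sup>+x. ennreal \<bar>f x\<bar> * ennreal \<bar>g x\<bar> \<partial>M)\<^sup>2"
    by (simp add: ennreal_power)
  also have "\<dots> \<le> (\<integral>\<^sup>+x. (ennreal \<bar>f x\<bar>)\<^sup>2 \<partial>M) * (\<integral>\<^sup>+x. (ennreal \<bar>g x\<bar>)\<^sup>2 \<partial>M)"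
    by (rule Cauchy_Schwarz_nn_integral) measurable
  finally show ?thesis
    by (simp add: ennreal_power)
qed

lemma nn_integral_square_kernel_integral_le:
  fixes K :: "'a \<Rightarrow> 'b \<Rightarrow> real"
  assumes [measurable]: "f \<in> borel_measurable N" "\<And>x. K x \<in> borel_measurable N"
    "h \<in> borel_measurable M"
    and kernel: "\<And>x. (\<integral>\<^sup>+y. ennreal ((K x y)\<^sup>2) \<partial>N) \<le> h x"
  shows "(\<integral>\<^sup>+x. ennreal ((\<integral>y. K x y * f y \<partial>N)\<^sup>2) \<partial>M) \<le>
    integral\<^sup>N M h * (\<integral>\<^sup>+y. ennreal ((f y)\<^sup>2) \<partial>N)"
proof -
  have "ennreal ((\<integral>y. K x y * f y \<partial>N)\<^sup>2) \<le> h x * (\<integral>\<^sup>+y. ennreal ((f y)\<^sup>2) \<partial>N)" for x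
  proof -
    have "ennreal ((\<integral>y. K x y * f y \<partial>N)\<^sup>2) \<le>
        (\<integral>\<^sup>+y. ennreal ((K x y)\<^sup>2) \<partial>N) * (\<integral>\<^sup>+y. ennreal ((f y)\<^sup>2) \<partial>N)"
      by (rule square_integral_mult_le) measurable
    also have "\<dots> \<le> h x * (\<integral>\<^sup>+y. ennreal ((f y)\<^sup>2) \<partial>N)"
      by (rule mult_right_mono[OF kernel]) simp
    finally show ?thesis .
  qed
  then have "(\<integral>\<^sup>+x. ennreal ((\<integral>y. K x y * f y \<partial>N)\<^sup>2) \<partial>M) \<le>
      (\<integral>\<^sup>+x. h x * (\<integral>\<^sup>+y. ennreal ((f y)\<^sup>2) \<partial>N) \<partial>M)"
    by (rule nn_integral_mono)
  also have "\<dots> = integral\<^sup>N M h * (\<integral>\<^sup>+y. ennreal ((f y)\<^sup>2) \<partial>N)"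
    by (rule nn_integral_multc) measurable
  finally show ?thesis .
qed

lemma L2_bounded_comm2_if_separated:
  assumes [measurable]: "b1 \<in> borel_measurable borel" "b2 \<in> borel_measurable borel"
    "h \<in> borel_measurable borel"
    and "0 < \<delta>" and sep: "\<And>x y. b1 x \<noteq> 0 \<Longrightarrow> b2 y \<noteq> 0 \<Longrightarrow> \<delta> \<le> \<bar>x - y\<bar>"
    and kernel: "\<And>x. (\<integral>\<^sup>+y. ennreal ((comm2_kernel b1 b2 x y)\<^sup>2) \<partial>lborel) \<le> h x"
    and finite: "(\<integral>\<^sup>+x. h x \<partial>lborel) < \<infinity>"
  shows "L2_bounded_on_Linf_c (comm2 b1 b2)"
  unfolding L2_bounded_on_Linf_c_def
proof (intro exI[of _ "sqrt (enn2real (\<integral>\<^sup>+x. h x \<partial>lborel))"] conjI allI impI)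
  fix f assume "Linf_c f"
  then have [measurable]: "f \<in> borel_measurable borel"
    by (simp add: Linf_c_def)
  have [measurable]: "comm2_kernel b1 b2 x \<in> borel_measurable borel" for x
    unfolding comm2_kernel_def by measurable
  have "(\<integral>\<^sup>+x. ennreal ((comm2 b1 b2 f x)\<^sup>2) \<partial>lborel) =
      (\<integral>\<^sup>+x. ennreal ((\<integral>y. comm2_kernel b1 b2 x y * f y \<partial>lborel)\<^sup>2) \<partial>lborel)"
    by (simp add: comm2_eq_integral_kernel[OF \<open>0 < \<delta>\<close> sep])
  also have "\<dots> \<le> (\<integral>\<^sup>+x. h x \<partial>lborel) * (\<integral>\<^sup>+y. ennreal ((f y)\<^sup>2) \<partial>lborel)"
    by (rule nn_integral_square_kernel_integral_le[OF _ _ _ kernel]) measurable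
  also have "(\<integral>\<^sup>+x. h x \<partial>lborel) = ennreal ((sqrt (enn2real (\<integral>\<^sup>+x. h x \<partial>lborel)))\<^sup>2)"
    using finite by (simp add: less_top)
  finally show "(\<integral>\<^sup>+x. ennreal ((comm2 b1 b2 f x)\<^sup>2) \<partial>lborel) \<le>
      ennreal ((sqrt (enn2real (\<integral>\<^sup>+x. h x \<partial>lborel)))\<^sup>2) * (\<integral>\<^sup>+x. ennreal ((f x)\<^sup>2) \<partial>lborel)" .
qed simp

section \<open>Lower bounds for power means\<close>

lemma square_div_le_of_half_le:
  fixes a c d :: real
  assumes "0 < a" "a \<le> 2 * \<bar>d\<bar>"
  shows "(c / d)\<^sup>2 \<le> 4 * (c / a)\<^sup>2"
proof -
  have "a\<^sup>2 \<le> (2 * \<bar>d\<bar>)\<^sup>2"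
    using assms by (intro power_mono) auto
  then have "c\<^sup>2 / (2 * \<bar>d\<bar>)\<^sup>2 \<le> c\<^sup>2 / a\<^sup>2"
    using assms by (intro divide_left_mono) auto
  then show ?thesis
    using assms by (simp add: field_simps)
qed

lemma set_integrable_Icc_bounded:
  fixes g :: "real \<Rightarrow> real"
  assumes [measurable]: "g \<in> borel_measurable borel"
    and bounded: "\<And>x. x \<in> {a..c} \<Longrightarrow> \<bar>g x\<bar> \<le> B"
  shows "set_integrable lborel {a..c} g"
proof (rule set_integrable_bound[where f = "\<lambda>_. B"])
  show "set_integrable lborel {a..c} (\<lambda>_. B)"
    unfolding set_integrable_def by (simp add: emeasure_lborel_Icc_eq)
  show "set_borel_measurable lborel {a..c} g"
    unfolding set_borel_measurable_def by measurable
  show "AE x in lborel. x \<in> {a..c} \<longrightarrow> norm (g x) \<le> norm B"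
    using bounded by (intro AE_I2) force
qed

lemma set_integral_Icc_ge:
  fixes \<phi> :: "real \<Rightarrow> real"
  assumes [measurable]: "\<phi> \<in> borel_measurable borel"
    and bounded: "\<And>x. x \<in> {a..c} \<Longrightarrow> 0 \<le> \<phi> x \<and> \<phi> x \<le> B"
    and lower: "\<And>x. x \<in> {p..q} \<Longrightarrow> t \<le> \<phi> x"
    and "a \<le> p" "p \<le> q" "q \<le> c" "0 \<le> t"
  shows "t * (q - p) \<le> (\<integral>x\<in>{a..c}. \<phi> x \<partial>lborel)"
proof -
  have "(\<lambda>x. indicator {a..c} x *\<^sub>R (t * indicator {p..q} x)) =
      (\<lambda>x. t * indicator {p..q} x :: real)"
    using assms by (auto simp: indicator_def)
  then have "t * (q - p) = (\<integral>x\<in>{a..c}. t * indicator {p..q} x \<partial>lborel)"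
    unfolding set_lebesgue_integral_def using \<open>p \<le> q\<close> by simp
  also have "\<dots> \<le> (\<integral>x\<in>{a..c}. \<phi> x \<partial>lborel)"
  proof (rule set_integral_mono)
    show "set_integrable lborel {a..c} (\<lambda>x. t * indicator {p..q} x)"
      using \<open>0 \<le> t\<close> by (intro set_integrable_Icc_bounded[where B = t]) (auto simp: indicator_def)
    show "set_integrable lborel {a..c} \<phi>"
      using bounded by (intro set_integrable_Icc_bounded[where B = B]) auto
    show "t * indicator {p..q} x \<le> \<phi> x" if "x \<in> {a..c}" for x
      using bounded[OF that] lower[of x] by (auto simp: indicator_def)
  qed
  finally show ?thesis .
qed

lemma power_mean_Icc_ge:
  fixes \<phi> :: "real \<Rightarrow> real"
  assumes [measurable]: "\<phi> \<in> borel_measurable borel"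
    and bounded: "\<And>x. x \<in> {a..c} \<Longrightarrow> 0 \<le> \<phi> x \<and> \<phi> x \<le> B"
    and lower: "\<And>x. x \<in> {p..q} \<Longrightarrow> t \<le> \<phi> x"
    and "a \<le> p" "p \<le> q" "q \<le> c" "a < c" "0 \<le> t" "0 < r"
  shows "t * ((q - p) / (c - a)) powr (1 / r) \<le>
    ((\<integral>x\<in>{a..c}. \<phi> x powr r \<partial>lborel) / (c - a)) powr (1 / r)"
proof -
  have "t powr r * (q - p) \<le> (\<integral>x\<in>{a..c}. \<phi> x powr r \<partial>lborel)"
    using bounded lower assms(4-9)
    by (intro set_integral_Icc_ge[where B = "B powr r"]) (auto intro: powr_mono2)
  then have "(t powr r * ((q - p) / (c - a))) powr (1 / r) \<le>
      ((\<integral>x\<in>{a..c}. \<phi> x powr r \<partial>lborel) / (c - a)) powr (1 / r)"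
    using assms(4-9) by (intro powr_mono2) (auto simp: divide_right_mono)
  moreover have "(t powr r * ((q - p) / (c - a))) powr (1 / r) =
      t * ((q - p) / (c - a)) powr (1 / r)"
    using assms(4-9) by (subst powr_mult) (auto simp: powr_powr)
  ultimately show ?thesis
    by simp
qed

definition joint_osc :: "real \<Rightarrow> (real \<Rightarrow> real) \<Rightarrow> (real \<Rightarrow> real) \<Rightarrow> real \<Rightarrow> real \<Rightarrow> real" where
  "joint_osc r b1 b2 a c =
    ((\<integral>x\<in>{a..c}. \<bar>b1 x - avg b1 a c\<bar> powr r * \<bar>b2 x - avg b2 a c\<bar> powr r \<partial>lborel) /
      (c - a)) powr (1 / r)"

lemma T_osc_eq_SUP_joint_osc:
  "T_osc r b1 b2 = (SUP I\<in>{(a, c). a < c}. ereal (joint_osc r b1 b2 (fst I) (snd I)))"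
  unfolding T_osc_def joint_osc_def ..

lemma Linf_locI:
  assumes "b \<in> borel_measurable borel" and "\<And>a c. \<exists>C. \<forall>x\<in>{a..c}. \<bar>b x\<bar> \<le> C"
  shows "Linf_loc b"
  unfolding Linf_loc_def
proof (intro conjI allI)
  fix a c :: real
  obtain C where "\<forall>x\<in>{a..c}. \<bar>b x\<bar> \<le> C"
    using assms(2) by blast
  then show "\<exists>C. AE x in lborel. x \<in> {a..c} \<longrightarrow> \<bar>b x\<bar> \<le> C"
    by (intro exI[of _ C] AE_I2) auto
qed (use assms(1) in simp)

section \<open>The counterexample\<close>

definition bump :: "nat \<Rightarrow> real set" where
  "bump k = {2 * 4^k .. 3 * 4^k}"

definition bump_height :: "nat \<Rightarrow> real" where
  "bump_height k = 2^k / (real k + 1)"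

definition bumps :: "real \<Rightarrow> real" where
  "bumps x = (\<Sum>k. bump_height k * indicator (bump k) x)"

lemma bump_height_nonneg: "0 \<le> bump_height k"
  by (simp add: bump_height_def)

lemma bump_ge: "x \<in> bump k \<Longrightarrow> 2 * 4^k \<le> x"
  by (simp add: bump_def)

lemma bump_below: "j < k \<Longrightarrow> x \<in> bump j \<Longrightarrow> x < 4^k"
proof -
  assume "j < k" "x \<in> bump j"
  then have "x \<le> 3 * 4^j" "4 * 4^j \<le> (4::real)^k"
    using power_increasing[of "Suc j" k "4::real"] by (simp_all add: bump_def)
  moreover have "(0::real) < 4^j"
    by simp
  ultimately show "x < 4^k"
    by linarith
qed

lemma bump_disjoint:
  assumes "x \<in> bump j" "x \<in> bump k"
  shows "j = k"
proof (rule ccontr)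
  assume "j \<noteq> k"
  then have "x < 4^k \<or> x < 4^j"
    using bump_below[OF _ assms(1), of k] bump_below[OF _ assms(2), of j]
    by (meson linorder_neqE_nat)
  moreover have "4^j \<le> x"
    using bump_ge[OF assms(1)] zero_less_power[of "4::real" j] by linarith
  moreover have "4^k \<le> x"
    using bump_ge[OF assms(2)] zero_less_power[of "4::real" k] by linarith
  ultimately show False
    by linarith
qed

lemma bumps_eq_bump_height: "x \<in> bump k \<Longrightarrow> bumps x = bump_height k"
proof -
  assume x: "x \<in> bump k"
  have "bump_height j * indicator (bump j) x = (if j = k then bump_height k else 0)" for j
  proof (cases "j = k")
    case False
    then have "x \<notin> bump j"
      using bump_disjoint[OF _ x] by blast
    with False show ?thesis
      by simp
  qed (simp add: x)
  then have "(\<lambda>j. bump_height j * indicator (bump j) x) sums bump_height k"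
    using sums_single[of k "\<lambda>_. bump_height k"] by simp
  then show "bumps x = bump_height k"
    unfolding bumps_def by (rule sums_unique[symmetric])
qed

lemma bumps_eq_0: "(\<And>k. x \<notin> bump k) \<Longrightarrow> bumps x = 0"
  by (simp add: bumps_def)

lemma bumps_cases:
  obtains k where "x \<in> bump k" "bumps x = bump_height k" | "bumps x = 0"
  using bumps_eq_bump_height bumps_eq_0 by blast

lemma bumps_nonneg: "0 \<le> bumps x"
  by (cases x rule: bumps_cases) (auto simp: bump_height_nonneg)

lemma bumps_nonzero_imp_ge_2: "bumps x \<noteq> 0 \<Longrightarrow> 2 \<le> x"
proof (cases x rule: bumps_cases)
  case (1 k)
  have "(1::real) \<le> 4^k"
    by simp
  with bump_ge[OF 1(1)] show ?thesis
    by linarith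
qed simp

lemma bumps_le_abs: "bumps x \<le> \<bar>x\<bar>"
proof (cases x rule: bumps_cases)
  case (1 k)
  have "bump_height k \<le> 2^k"
    by (simp add: bump_height_def divide_le_eq)
  also have "(2::real)^k \<le> 4^k"
    by (intro power_mono) auto
  also have "\<dots> \<le> x"
    using bump_ge[OF 1(1)] zero_less_power[of "4::real" k] by linarith
  finally show ?thesis
    using 1(2) by simp
qed simp

lemma bumps_eq_0_in_gap:
  assumes "4^k \<le> x" "x < 2 * 4^k"
  shows "bumps x = 0"
proof (rule bumps_eq_0)
  fix j
  show "x \<notin> bump j"
  proof
    assume x: "x \<in> bump j"
    show False
    proof (cases "j < k")
      case True
      with bump_below[OF True x] assms(1) show False
        by linarith
    next
      case False
      then have "(4::real)^k \<le> 4^j"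
        by (intro power_increasing) auto
      with bump_ge[OF x] assms(2) show False
        by linarith
    qed
  qed
qed

lemma bump_in_sets_borel [measurable]: "bump k \<in> sets borel"
  by (simp add: bump_def)

lemma bumps_measurable [measurable]: "bumps \<in> borel_measurable borel"
  unfolding bumps_def by measurable

lemma bumps_div_square_le:
  assumes "y \<in> bump k"
  shows "(bumps y / y)\<^sup>2 \<le> (bump_height k / (2 * 4^k))\<^sup>2"
proof -
  have "0 < 2 * (4::real)^k"
    by simp
  with bump_ge[OF assms] have "0 < y"
    by linarith
  have "bumps y / y \<le> bump_height k / (2 * 4^k)"
    unfolding bumps_eq_bump_height[OF assms] using bump_ge[OF assms] bump_height_nonneg[of k]
    by (intro frac_le) auto
  with \<open>0 < y\<close> bumps_nonneg[of y] show ?thesis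
    by (intro power_mono) auto
qed

lemma bump_height_div_square_mult: "(bump_height k / (2 * 4^k))\<^sup>2 * 4^k = 1 / (4 * (real k + 1)\<^sup>2)"
proof -
  have "((2::real)^k)\<^sup>2 = 4^k"
    by (simp add: power2_eq_square flip: power_mult_distrib)
  moreover have "0 < (4::real)^k" "0 < (real k + 1)\<^sup>2"
    by simp_all
  ultimately show ?thesis
    unfolding bump_height_def by (simp add: divide_simps) (simp add: power2_eq_square)
qed

lemma nn_integral_bumps_div_square_finite: "(\<integral>\<^sup>+y. ennreal ((bumps y / y)\<^sup>2) \<partial>lborel) < \<infinity>"
proof -
  define w where "w k = (bump_height k / (2 * 4^k))\<^sup>2" for k
  have "ennreal ((bumps y / y)\<^sup>2) \<le> (\<Sum>k. ennreal (w k) * indicator (bump k) y)" for y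
  proof (cases y rule: bumps_cases)
    case (1 k)
    have "ennreal ((bumps y / y)\<^sup>2) \<le> (\<Sum>j\<in>{k}. ennreal (w j) * indicator (bump j) y)"
      using bumps_div_square_le[OF 1(1)] 1(1) unfolding w_def by (simp add: ennreal_leI)
    also have "\<dots> \<le> (\<Sum>j. ennreal (w j) * indicator (bump j) y)"
      by (intro sum_le_suminf summableI) auto
    finally show ?thesis .
  qed simp
  then have "(\<integral>\<^sup>+y. ennreal ((bumps y / y)\<^sup>2) \<partial>lborel) \<le>
      (\<integral>\<^sup>+y. (\<Sum>k. ennreal (w k) * indicator (bump k) y) \<partial>lborel)"
    by (rule nn_integral_mono)
  also have "\<dots> = (\<Sum>k. \<integral>\<^sup>+y. ennreal (w k) * indicator (bump k) y \<partial>lborel)"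
    by (rule nn_integral_suminf) measurable
  also have "\<dots> = (\<Sum>k. ennreal (1 / (4 * (real k + 1)\<^sup>2)))"
    using bump_height_div_square_mult
    by (simp add: nn_integral_cmult_indicator bump_def w_def ennreal_mult' flip: ennreal_mult)
  also have "\<dots> < \<infinity>"
  proof -
    have "summable (\<lambda>k. 1 / real ((k + 1)\<^sup>2) / 4)"
      using inverse_squares_sums by (intro summable_divide sums_summable)
    then have "summable (\<lambda>k. 1 / (4 * (real k + 1)\<^sup>2))"
      by (simp add: add.commute mult.commute)
    then show ?thesis
      by (simp add: ennreal_suminf_neq_top less_top[symmetric])
  qed
  finally show ?thesis .
qed

lemma indicator_unit_mult_bumps: "indicator {0..1} y * bumps y = 0"
  unfolding indicator_def using bumps_nonzero_imp_ge_2[of y] by fastforce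

lemma nn_integral_comm2_kernel_indicator_bumps_in_unit:
  assumes "x \<in> {0..1}"
  shows "(\<integral>\<^sup>+y. ennreal ((comm2_kernel (indicator {0..1}) bumps x y)\<^sup>2) \<partial>lborel) \<le>
    4 * (\<integral>\<^sup>+y. ennreal ((bumps y / y)\<^sup>2) \<partial>lborel)"
proof -
  have "ennreal ((comm2_kernel (indicator {0..1}) bumps x y)\<^sup>2) \<le>
      4 * ennreal ((bumps y / y)\<^sup>2)" for y
  proof -
    have "comm2_kernel (indicator {0..1}) bumps x y = - (bumps y / (x - y))"
      using assms indicator_unit_mult_bumps[of x]
      by (simp add: comm2_kernel_if_disjoint[OF indicator_unit_mult_bumps])
    moreover have "(bumps y / (x - y))\<^sup>2 \<le> 4 * (bumps y / y)\<^sup>2"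
    proof (cases "bumps y = 0")
      case False
      then have "2 \<le> y"
        by (rule bumps_nonzero_imp_ge_2)
      with assms show ?thesis
        by (intro square_div_le_of_half_le) auto
    qed simp
    ultimately have "ennreal ((comm2_kernel (indicator {0..1}) bumps x y)\<^sup>2) \<le>
        ennreal (4 * (bumps y / y)\<^sup>2)"
      by (simp add: ennreal_leI)
    then show ?thesis
      by (simp add: ennreal_mult')
  qed
  then have "(\<integral>\<^sup>+y. ennreal ((comm2_kernel (indicator {0..1}) bumps x y)\<^sup>2) \<partial>lborel) \<le>
      (\<integral>\<^sup>+y. 4 * ennreal ((bumps y / y)\<^sup>2) \<partial>lborel)"
    by (rule nn_integral_mono)
  also have "\<dots> = 4 * (\<integral>\<^sup>+y. ennreal ((bumps y / y)\<^sup>2) \<partial>lborel)"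
    by (rule nn_integral_cmult) measurable
  finally show ?thesis .
qed

lemma nn_integral_comm2_kernel_indicator_bumps_off_unit:
  assumes "x \<notin> {0..1}"
  shows "(\<integral>\<^sup>+y. ennreal ((comm2_kernel (indicator {0..1}) bumps x y)\<^sup>2) \<partial>lborel) \<le>
    ennreal (4 * (bumps x / x)\<^sup>2)"
proof -
  have "ennreal ((comm2_kernel (indicator {0..1}) bumps x y)\<^sup>2) \<le>
      ennreal (4 * (bumps x / x)\<^sup>2) * indicator {0..1} y" for y
  proof -
    have K: "comm2_kernel (indicator {0..1}) bumps x y = - (bumps x * indicator {0..1} y / (x - y))"
      using assms by (simp add: comm2_kernel_if_disjoint[OF indicator_unit_mult_bumps])
    show ?thesis
    proof (cases "bumps x \<noteq> 0 \<and> y \<in> {0..1}")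
      case True
      then have "2 \<le> x"
        using bumps_nonzero_imp_ge_2 by blast
      with True have "(comm2_kernel (indicator {0..1}) bumps x y)\<^sup>2 \<le> 4 * (bumps x / x)\<^sup>2"
        unfolding K by (simp add: square_div_le_of_half_le)
      with True show ?thesis
        by (simp add: ennreal_leI)
    qed (auto simp: K)
  qed
  then have "(\<integral>\<^sup>+y. ennreal ((comm2_kernel (indicator {0..1}) bumps x y)\<^sup>2) \<partial>lborel) \<le>
      (\<integral>\<^sup>+y. ennreal (4 * (bumps x / x)\<^sup>2) * indicator {0..1::real} y \<partial>lborel)"
    by (intro nn_integral_mono)
  also have "\<dots> = ennreal (4 * (bumps x / x)\<^sup>2)"
    by (simp add: nn_integral_cmult_indicator)
  finally show ?thesis .
qed

lemma nn_integral_comm2_kernel_indicator_bumps_le: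
  "(\<integral>\<^sup>+y. ennreal ((comm2_kernel (indicator {0..1}) bumps x y)\<^sup>2) \<partial>lborel) \<le>
    ennreal (4 * (bumps x / x)\<^sup>2) +
      4 * (\<integral>\<^sup>+y. ennreal ((bumps y / y)\<^sup>2) \<partial>lborel) * indicator {0..1} x"
proof (cases "x \<in> {0..1}")
  case True
  then show ?thesis
    using nn_integral_comm2_kernel_indicator_bumps_in_unit[OF True] by (simp add: add_increasing)
next
  case False
  then show ?thesis
    using nn_integral_comm2_kernel_indicator_bumps_off_unit[OF False] by simp
qed

lemma L2_bounded_comm2_indicator_bumps: "L2_bounded_on_Linf_c (comm2 (indicator {0..1}) bumps)"
proof (rule L2_bounded_comm2_if_separated[OF _ _ _ _ _ nn_integral_comm2_kernel_indicator_bumps_le])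
  show "1 \<le> \<bar>x - y\<bar>" if "indicator {0..1} x \<noteq> (0::real)" "bumps y \<noteq> 0" for x y
    using that bumps_nonzero_imp_ge_2[of y] by (auto simp: indicator_def)
  show "(\<integral>\<^sup>+x. ennreal (4 * (bumps x / x)\<^sup>2) +
      4 * (\<integral>\<^sup>+y. ennreal ((bumps y / y)\<^sup>2) \<partial>lborel) * indicator {0..1} x \<partial>lborel) < \<infinity>"
    using nn_integral_bumps_div_square_finite
    by (simp add: nn_integral_add nn_integral_cmult nn_integral_cmult_indicator ennreal_mult'
        ennreal_mult_less_top)
qed simp_all

lemma avg_indicator_unit: "1 \<le> c \<Longrightarrow> avg (indicator {0..1}) 0 c = 1 / c"
proof -
  assume "1 \<le> c"
  then have "(\<lambda>x. indicator {0..c} x *\<^sub>R indicator {0..1} x) = (indicator {0..1} :: real \<Rightarrow> real)"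
    by (auto simp: indicator_def)
  then show ?thesis
    unfolding avg_def set_lebesgue_integral_def by simp
qed

lemma avg_bumps_ge: "bump_height k / 3 \<le> avg bumps 0 (3 * 4^k)"
proof -
  have "bump_height k * (3 * 4^k - 2 * 4^k) \<le> (\<integral>x\<in>{0..3 * 4^k}. bumps x \<partial>lborel)"
  proof (rule set_integral_Icc_ge[where B = "3 * 4^k"])
    show "0 \<le> bumps x \<and> bumps x \<le> 3 * 4^k" if "x \<in> {0..3 * 4^k}" for x
      using that bumps_nonneg[of x] bumps_le_abs[of x] by auto
    show "bump_height k \<le> bumps x" if "x \<in> {2 * 4^k..3 * 4^k}" for x
      using that by (simp add: bumps_eq_bump_height bump_def)
  qed (auto simp: bump_height_nonneg)
  then show ?thesis
    unfolding avg_def by (simp add: field_simps)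
qed

lemma osc_indicator_unit_ge:
  assumes "3 \<le> c" "0 < r"
  shows "1 / 2 * (1 / c) powr (1 / r) \<le> osc r (indicator {0..1}) 0 c"
proof -
  have "1 / 2 * ((1 - 0) / (c - 0)) powr (1 / r) \<le>
      ((\<integral>x\<in>{0..c}. \<bar>indicator {0..1} x - 1 / c\<bar> powr r \<partial>lborel) / (c - 0)) powr (1 / r)"
  proof (rule power_mean_Icc_ge[where B = 1])
    show "0 \<le> \<bar>indicator {0..1} x - 1 / c\<bar> \<and> \<bar>indicator {0..1} x - 1 / c\<bar> \<le> 1"
      if "x \<in> {0..c}" for x :: real
      using assms by (auto simp: indicator_def field_simps)
    show "1 / 2 \<le> \<bar>indicator {0..1} x - 1 / c\<bar>" if "x \<in> {0..1}" for x :: real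
      using that assms by (simp add: field_simps)
  qed (use assms in auto)
  then show ?thesis
    using assms by (simp add: osc_def avg_indicator_unit)
qed

lemma osc_bumps_ge:
  assumes "0 < r"
  shows "bump_height k / 2 * (1 / 6) powr (1 / r) \<le> osc r bumps 0 (3 * 4^k)"
proof -
  define m where "m = avg bumps 0 (3 * 4^k)"
  define h where "h = bump_height k"
  have pos: "(0::real) < 4^k"
    by simp
  have bounded: "0 \<le> \<bar>bumps x - m\<bar> \<and> \<bar>bumps x - m\<bar> \<le> 3 * 4^k + \<bar>m\<bar>" if "x \<in> {0..3 * 4^k}" for x
    using that bumps_nonneg[of x] bumps_le_abs[of x] by auto
  \<comment> \<open>Whatever the mean m, bumps is at distance at least h/2 from it either on the gap
    [4^k, 3/2 * 4^k], where it vanishes, or on the first half of bump k.\<close>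
  obtain p where p: "p \<in> {4^k, 2 * 4^k}"
    and lower: "\<And>x. x \<in> {p..p + 4^k / 2} \<Longrightarrow> h / 2 \<le> \<bar>bumps x - m\<bar>"
  proof (cases "h / 2 \<le> \<bar>m\<bar>")
    case True
    have "bumps x = 0" if "x \<in> {4^k..4^k + 4^k / 2}" for x
    proof (rule bumps_eq_0_in_gap)
      show "4^k \<le> x" "x < 2 * 4^k"
        using that pos unfolding atLeastAtMost_iff by linarith+
    qed
    with True show ?thesis
      by (intro that[of "4^k"]) auto
  next
    case False
    have "bumps x = h" if "x \<in> {2 * 4^k..2 * 4^k + 4^k / 2}" for x
      using that pos unfolding h_def by (intro bumps_eq_bump_height) (simp add: bump_def)
    with False show ?thesis
      by (intro that[of "2 * 4^k"]) auto
  qed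
  have "h / 2 * ((p + 4^k / 2 - p) / (3 * 4^k - 0)) powr (1 / r) \<le>
      ((\<integral>x\<in>{0..3 * 4^k}. \<bar>bumps x - m\<bar> powr r \<partial>lborel) / (3 * 4^k - 0)) powr (1 / r)"
    using p pos assms
    by (intro power_mean_Icc_ge[OF _ bounded lower]) (auto simp: h_def bump_height_nonneg)
  then show ?thesis
    unfolding osc_def m_def h_def by simp
qed

lemma joint_osc_indicator_bumps_ge:
  assumes "0 < r"
  shows "bump_height k / 6 * (1 / (3 * 4^k)) powr (1 / r) \<le>
    joint_osc r (indicator {0..1}) bumps 0 (3 * 4^k)"
proof -
  define L :: real where "L = 3 * 4^k"
  define m1 where "m1 = avg (indicator {0..1}) 0 L"
  define m2 where "m2 = avg bumps 0 L"
  have "3 \<le> L"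
    unfolding L_def by simp
  then have m1: "m1 = 1 / L"
    unfolding m1_def by (intro avg_indicator_unit) auto
  have m2: "bump_height k / 3 \<le> m2"
    unfolding m2_def L_def by (rule avg_bumps_ge)
  have "bump_height k / 6 * ((1 - 0) / (L - 0)) powr (1 / r) \<le>
      ((\<integral>x\<in>{0..L}. (\<bar>indicator {0..1} x - m1\<bar> * \<bar>bumps x - m2\<bar>) powr r \<partial>lborel) /
        (L - 0)) powr (1 / r)"
  proof (rule power_mean_Icc_ge[where B = "L + \<bar>m2\<bar>"])
    show "0 \<le> \<bar>indicator {0..1} x - m1\<bar> * \<bar>bumps x - m2\<bar> \<and>
        \<bar>indicator {0..1} x - m1\<bar> * \<bar>bumps x - m2\<bar> \<le> L + \<bar>m2\<bar>" if "x \<in> {0..L}" for x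
    proof -
      have "\<bar>indicator {0..1} x - m1\<bar> \<le> 1"
        using \<open>3 \<le> L\<close> by (auto simp: m1 indicator_def field_simps)
      moreover have "\<bar>bumps x - m2\<bar> \<le> L + \<bar>m2\<bar>"
        using that bumps_nonneg[of x] bumps_le_abs[of x] by auto
      ultimately show ?thesis
        using mult_mono[of _ 1 _ "L + \<bar>m2\<bar>"] by fastforce
    qed
    show "bump_height k / 6 \<le> \<bar>indicator {0..1} x - m1\<bar> * \<bar>bumps x - m2\<bar>" if "x \<in> {0..1}" for x
    proof -
      have "1 / 2 \<le> \<bar>indicator {0..1} x - m1\<bar>"
        using that \<open>3 \<le> L\<close> by (simp add: m1 field_simps)
      moreover have "bump_height k / 3 \<le> \<bar>bumps x - m2\<bar>"
        using that m2 bumps_nonzero_imp_ge_2[of x] by fastforce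
      ultimately show ?thesis
        using mult_mono[of "1 / 2" _ "bump_height k / 3"] bump_height_nonneg[of k] by fastforce
    qed
  qed (use \<open>3 \<le> L\<close> assms bump_height_nonneg in auto)
  then show ?thesis
    unfolding joint_osc_def m1_def m2_def L_def by (simp add: powr_mult)
qed

lemma filterlim_bump_height_powr_at_top:
  assumes "2 < r"
  shows "filterlim (\<lambda>k. bump_height k * (1 / (18 * 4^k)) powr (1 / r)) at_top sequentially"
proof -
  define q where "q = 2 / 4 powr (1 / r)"
  have "4 powr (1 / r) < (4::real) powr (1 / 2)"
    using assms by (intro powr_less_mono) (auto simp: field_simps)
  then have "1 < q"
    unfolding q_def by (simp add: powr_half_sqrt)
  have eq: "bump_height k * (1 / (18 * 4^k)) powr (1 / r) =
      (1 / 18) powr (1 / r) * (q ^ k / (real k + 1))" for k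
  proof -
    have "(4^k) powr (1 / r) = (4 powr (1 / r)) ^ k"
      by (simp add: powr_realpow[symmetric] powr_powr mult.commute)
    then show ?thesis
      unfolding q_def bump_height_def by (simp add: powr_divide powr_mult field_simps)
  qed
  have "filterlim (\<lambda>k. q ^ k / (real k + 1)) at_top sequentially"
    using \<open>1 < q\<close> by real_asymp
  then have "filterlim (\<lambda>k. (1 / 18) powr (1 / r) * (q ^ k / (real k + 1))) at_top sequentially"
    by (intro filterlim_tendsto_pos_mult_at_top[OF tendsto_const]) auto
  then show ?thesis
    by (simp only: eq)
qed

lemma S_osc_indicator_bumps_eq_infinity:
  assumes "2 < r"
  shows "S_osc r (indicator {0..1}) bumps = \<infinity>"
  unfolding S_osc_def
proof (rule SUP_PInfty)
  fix n :: nat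
  obtain k where k: "6 * real n \<le> bump_height k * (1 / (18 * 4^k)) powr (1 / r)"
    using filterlim_bump_height_powr_at_top[OF assms]
    unfolding filterlim_at_top eventually_sequentially by blast
  have "real n \<le> bump_height k / 4 * (1 / (18 * 4^k)) powr (1 / r)"
    using k by linarith
  also have "\<dots> =
      (1 / 2 * (1 / (3 * 4^k)) powr (1 / r)) * (bump_height k / 2 * (1 / 6) powr (1 / r))"
    by (simp add: powr_mult[symmetric])
  also have "\<dots> \<le> osc r (indicator {0..1}) 0 (3 * 4^k) * osc r bumps 0 (3 * 4^k)"
    using assms bump_height_nonneg[of k]
    by (intro mult_mono osc_indicator_unit_ge osc_bumps_ge) (auto simp: osc_def)
  finally show "\<exists>I\<in>{(a, c). a < c}. ereal (real n) \<le>
      ereal (osc r (indicator {0..1}) (fst I) (snd I) * osc r bumps (fst I) (snd I))"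
    by (intro bexI[of _ "(0, 3 * 4^k)"]) auto
qed

lemma T_osc_indicator_bumps_eq_infinity:
  assumes "2 < r"
  shows "T_osc r (indicator {0..1}) bumps = \<infinity>"
  unfolding T_osc_eq_SUP_joint_osc
proof (rule SUP_PInfty)
  fix n :: nat
  obtain k where k: "6 * real n \<le> bump_height k * (1 / (18 * 4^k)) powr (1 / r)"
    using filterlim_bump_height_powr_at_top[OF assms]
    unfolding filterlim_at_top eventually_sequentially by blast
  have "real n \<le> bump_height k / 6 * (1 / (18 * 4^k)) powr (1 / r)"
    using k by linarith
  also have "\<dots> \<le> bump_height k / 6 * (1 / (3 * 4^k)) powr (1 / r)"
    using assms bump_height_nonneg[of k] by (intro mult_left_mono powr_mono2 divide_left_mono) auto
  also have "\<dots> \<le> joint_osc r (indicator {0..1}) bumps 0 (3 * 4^k)"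
    using assms by (intro joint_osc_indicator_bumps_ge) auto
  finally show "\<exists>I\<in>{(a, c). a < c}.
      ereal (real n) \<le> ereal (joint_osc r (indicator {0..1}) bumps (fst I) (snd I))"
    by (intro bexI[of _ "(0, 3 * 4^k)"]) auto
qed

lemma Linf_loc_bumps: "Linf_loc bumps"
proof (rule Linf_locI)
  show "\<exists>C. \<forall>x\<in>{a..c}. \<bar>bumps x\<bar> \<le> C" for a c :: real
  proof (intro exI[of _ "max \<bar>a\<bar> \<bar>c\<bar>"] ballI)
    fix x assume "x \<in> {a..c}"
    then have "\<bar>x\<bar> \<le> max \<bar>a\<bar> \<bar>c\<bar>"
      by auto
    then show "\<bar>bumps x\<bar> \<le> max \<bar>a\<bar> \<bar>c\<bar>"
      using bumps_le_abs[of x] bumps_nonneg[of x] by linarith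
  qed
qed simp

theorem corollary4p8:
  shows "\<exists>b1 b2. Linf_loc b1 \<and> Linf_loc b2 \<and> L2_bounded_on_Linf_c (comm2 b1 b2) \<and>
    (\<forall>\<epsilon>>0. S_osc (2 + \<epsilon>) b1 b2 = \<infinity> \<and> T_osc (2 + \<epsilon>) b1 b2 = \<infinity>)"
proof (rule exI[of _ "indicator {0..1}"], rule exI[of _ bumps], intro conjI allI impI)
  show "Linf_loc (indicator {0..1::real})"
    by (rule Linf_locI) (auto simp: indicator_def intro!: exI[of _ 1])
  show "Linf_loc bumps"
    by (rule Linf_loc_bumps)
  show "L2_bounded_on_Linf_c (comm2 (indicator {0..1}) bumps)"
    by (rule L2_bounded_comm2_indicator_bumps)
  fix \<epsilon> :: real
  assume "0 < \<epsilon>"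
  then show "S_osc (2 + \<epsilon>) (indicator {0..1}) bumps = \<infinity>"
    and "T_osc (2 + \<epsilon>) (indicator {0..1}) bumps = \<infinity>"
    by (simp_all add: S_osc_indicator_bumps_eq_infinity T_osc_indicator_bumps_eq_infinity)
qed

end
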